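(* Let $S$ be a space homeomorphic to $\{0\}\cup\{1/n: n\in\mathbb{N}\}\subset\mathbb{R}$ and let $E$ be a Banach space. Then there exists a continuous surjective mapping $T: C_p(S) \rightarrow E_w$ if and only if $E$ is separable.
   Context: $C_p(S)$ is the space of continuous real-valued functions on $S$ with the pointwise convergence topology; $E_w$ is $E$ with its weak topology. *)

theory Defs
  imports "HOL-Analysis.Analysis"
begin

definition weak_topology :: "('e::real_normed_vector) topology" where
  "weak_topology = topology_generated_by
     {f -` U | (f :: 'e \<Rightarrow> real) U. bounded_linear f \<and> open U}"

text \<open>Functions are represented
  extensionally on topspace X, as in product_topology.\<close>
definition Cp :: "'a topology \<Rightarrow> ('a \<Rightarrow> real) topology" where
  "Cp X = subtopology (product_topology (\<lambda>_. euclideanreal) (topspace X))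
             {f. continuous_map X euclideanreal f}"

definition conv_seq :: "real topology" where
  "conv_seq = subtopology euclideanreal (insert 0 {1 / real n | n. n \<ge> 1})"

end

(*
  If S is homeomorphic to a convergent sequence, C_p(S) is a subspace of a countable power of the
  reals, hence second countable, so its continuous image E_w is separable. A countable
  weakly dense subset of E has a norm dense rational span: by Hahn-Banach, a point outside the norm
  closure of a subspace is separated from it by a weakly open half-space.

  Conversely, the staircases in C_p(S), i.e. functions that descend from 1 to 0 through the levels
  1/(k+1) along the sequence, form a closed set on which the number of points at each level is
  locally constant, and every sequence of positive integers occurs as such numbers. Extended to all
  of C_p(S) by Tietze's theorem, these counts select, for each point of a separable Banach space E,
  the terms of a fast converging series of differences of a dense sequence that sums to it. This
  gives a continuous surjection onto E, which stays continuous into the weaker topology E_w.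
*)
theory Submission
  imports Defs
begin

section \<open>Hahn--Banach for sublinear functionals\<close>

definition sublinear :: "('a::real_vector \<Rightarrow> real) \<Rightarrow> bool" where
  "sublinear p \<longleftrightarrow> (\<forall>x y. p (x + y) \<le> p x + p y) \<and> (\<forall>c x. 0 \<le> c \<longrightarrow> p (c *\<^sub>R x) = c * p x)"

lemma sublinearD:
  assumes "sublinear p"
  shows sublinear_add: "p (x + y) \<le> p x + p y"
    and sublinear_scaleR: "0 \<le> c \<Longrightarrow> p (c *\<^sub>R x) = c * p x"
  using assms unfolding sublinear_def by blast+

lemma sublinear_zero: "sublinear p \<Longrightarrow> p 0 = 0"
  using sublinear_scaleR[of p 0 0] by simp

text \<open>Partial linear functionals dominated by \<open>p\<close> are represented by their graphs: a linear
  subspace of \<open>'a \<times> real\<close> lying below the graph of \<open>p\<close> is automatically the graph of a function.\<close>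
definition dominated_graph :: "('a::real_vector \<Rightarrow> real) \<Rightarrow> ('a \<times> real) set \<Rightarrow> bool" where
  "dominated_graph p G \<longleftrightarrow> subspace G \<and> (\<forall>(x, a) \<in> G. a \<le> p x)"

lemma dominated_graph_unique:
  assumes "sublinear p" "dominated_graph p G" "(x, a) \<in> G" "(x, b) \<in> G"
  shows "a = b"
proof -
  have G: "subspace G" "\<And>x a. (x, a) \<in> G \<Longrightarrow> a \<le> p x"
    using assms(2) unfolding dominated_graph_def by auto
  have "(0, a - b) \<in> G" "(0, b - a) \<in> G"
    using subspace_diff[OF G(1) assms(3) assms(4)] subspace_diff[OF G(1) assms(4) assms(3)] by simp_all
  then show ?thesis
    using G(2)[of 0 "a - b"] G(2)[of 0 "b - a"] sublinear_zero[OF assms(1)] by simp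
qed

lemma dominated_graph_Union_chain:
  assumes "C \<noteq> {}" "C \<in> chains {G. dominated_graph p G}"
  shows "dominated_graph p (\<Union>C)"
proof -
  have dom: "dominated_graph p G" if "G \<in> C" for G
    using assms(2) that unfolding chains_def by blast
  have common: "\<exists>G\<in>C. u \<in> G \<and> v \<in> G" if "u \<in> \<Union>C" "v \<in> \<Union>C" for u v
    using assms(2) that unfolding chains_def chain_subset_def by blast
  have "subspace (\<Union>C)"
    unfolding subspace_def
  proof (intro conjI ballI allI)
    show "0 \<in> \<Union>C"
      using assms(1) dom subspace_0 unfolding dominated_graph_def by blast
    show "u + v \<in> \<Union>C" if "u \<in> \<Union>C" "v \<in> \<Union>C" for u v
      using common[OF that] dom subspace_add unfolding dominated_graph_def by blast
    show "c *\<^sub>R u \<in> \<Union>C" if "u \<in> \<Union>C" for c u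
      using that dom subspace_scale unfolding dominated_graph_def by blast
  qed
  then show ?thesis
    using dom unfolding dominated_graph_def by blast
qed

definition graph_extend :: "('a::real_vector \<times> real) set \<Rightarrow> 'a \<Rightarrow> real \<Rightarrow> ('a \<times> real) set" where
  "graph_extend G z c = {(x + t *\<^sub>R z, a + t * c) | x a t. (x, a) \<in> G}"

lemma subset_graph_extend: "G \<subseteq> graph_extend G z c"
  unfolding graph_extend_def by force

lemma graph_extendI: "(x, a) \<in> G \<Longrightarrow> (x + t *\<^sub>R z, a + t * c) \<in> graph_extend G z c"
  unfolding graph_extend_def by blast

lemma in_graph_extend: "(0, 0) \<in> G \<Longrightarrow> (z, c) \<in> graph_extend G z c"
  unfolding graph_extend_def by force

lemma subspace_graph_extend:
  assumes sub: "subspace G"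
  shows "subspace (graph_extend G z c)"
  unfolding subspace_def
proof (intro conjI ballI allI)
  show "0 \<in> graph_extend G z c"
    using subset_graph_extend subspace_0[OF sub] by blast
  show "u + v \<in> graph_extend G z c" if u: "u \<in> graph_extend G z c" and v: "v \<in> graph_extend G z c" for u v
  proof -
    obtain x a t where "u = (x + t *\<^sub>R z, a + t * c)" "(x, a) \<in> G"
      using u unfolding graph_extend_def by blast
    moreover obtain y b s where "v = (y + s *\<^sub>R z, b + s * c)" "(y, b) \<in> G"
      using v unfolding graph_extend_def by blast
    moreover have "(x + y, a + b) \<in> G"
      using subspace_add[OF sub \<open>(x, a) \<in> G\<close> \<open>(y, b) \<in> G\<close>] by simp
    ultimately show ?thesis
      using graph_extendI[of "x + y" "a + b" G "t + s" z c] by (simp add: algebra_simps)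
  qed
  show "r *\<^sub>R u \<in> graph_extend G z c" if u: "u \<in> graph_extend G z c" for r u
  proof -
    obtain x a t where "u = (x + t *\<^sub>R z, a + t * c)" "(x, a) \<in> G"
      using u unfolding graph_extend_def by blast
    moreover have "(r *\<^sub>R x, r * a) \<in> G"
      using subspace_scale[OF sub \<open>(x, a) \<in> G\<close>, of r] by simp
    ultimately show ?thesis
      using graph_extendI[of "r *\<^sub>R x" "r * a" G "r * t" z c] by (simp add: algebra_simps)
  qed
qed

lemma dominated_graph_extend:
  assumes p: "sublinear p" and G: "dominated_graph p G"
    and c: "\<And>x a. (x, a) \<in> G \<Longrightarrow> a - p (x - z) \<le> c \<and> c \<le> p (x + z) - a"
  shows "dominated_graph p (graph_extend G z c)"
proof -
  have sub: "subspace G" and below: "\<And>x a. (x, a) \<in> G \<Longrightarrow> a \<le> p x"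
    using G unfolding dominated_graph_def by auto
  have "a + t * c \<le> p (x + t *\<^sub>R z)" if "(x, a) \<in> G" for x a t
  proof (cases t "0::real" rule: linorder_cases)
    case equal
    then show ?thesis using below that by simp
  next
    case greater
    have "((1 / t) *\<^sub>R x, (1 / t) * a) \<in> G"
      using subspace_scale[OF sub that, of "1 / t"] by simp
    then have "c \<le> p ((1 / t) *\<^sub>R x + z) - a / t"
      using c by simp
    then have "t * c \<le> t * p ((1 / t) *\<^sub>R x + z) - a"
      using greater by (simp add: field_simps)
    also have "t * p ((1 / t) *\<^sub>R x + z) = p (x + t *\<^sub>R z)"
      using sublinear_scaleR[OF p, of t "(1 / t) *\<^sub>R x + z"] greater by (simp add: scaleR_add_right)
    finally show ?thesis by simp
  next
    case less
    have "((-1 / t) *\<^sub>R x, (-1 / t) * a) \<in> G"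
      using subspace_scale[OF sub that, of "-1 / t"] by simp
    then have "- a / t - p ((-1 / t) *\<^sub>R x - z) \<le> c"
      using c by simp
    then have "a - (- t) * p ((-1 / t) *\<^sub>R x - z) \<le> - t * c"
      using less by (simp add: field_simps)
    moreover have "(- t) * p ((-1 / t) *\<^sub>R x - z) = p (x + t *\<^sub>R z)"
      using sublinear_scaleR[OF p, of "- t" "(-1 / t) *\<^sub>R x - z"] less
      by (simp add: scaleR_diff_right)
    ultimately show ?thesis by simp
  qed
  then show ?thesis
    using subspace_graph_extend[OF sub] unfolding dominated_graph_def graph_extend_def by blast
qed

text \<open>An admissible value exists because \<open>a + b \<le> p (x + y) \<le> p (x - z) + p (y + z)\<close>.\<close>
lemma dominated_graph_extension_value:
  assumes p: "sublinear p" and G: "dominated_graph p G"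
  obtains c where "\<And>x a. (x, a) \<in> G \<Longrightarrow> a - p (x - z) \<le> c \<and> c \<le> p (x + z) - a"
proof -
  have sub: "subspace G" and below: "\<And>x a. (x, a) \<in> G \<Longrightarrow> a \<le> p x"
    using G unfolding dominated_graph_def by auto
  have key: "a - p (x - z) \<le> p (y + z) - b" if "(x, a) \<in> G" "(y, b) \<in> G" for x a y b
  proof -
    have "a + b \<le> p (x + y)"
      using below subspace_add[OF sub that] by simp
    also have "\<dots> \<le> p (x - z) + p (y + z)"
      using sublinear_add[OF p, of "x - z" "y + z"] by simp
    finally show ?thesis by simp
  qed
  define L where "L = {a - p (x - z) | x a. (x, a) \<in> G}"
  have "(0, 0) \<in> G"
    using subspace_0[OF sub] by (simp add: zero_prod_def)
  then have L: "L \<noteq> {}" "bdd_above L"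
    unfolding L_def bdd_above_def using key by blast+
  show thesis
  proof (rule that[of "Sup L"], rule conjI)
    show "a - p (x - z) \<le> Sup L" if "(x, a) \<in> G" for x a
      using L that by (intro cSup_upper) (auto simp: L_def)
    show "Sup L \<le> p (x + z) - a" if "(x, a) \<in> G" for x a
      using L key that by (intro cSup_least) (auto simp: L_def)
  qed
qed

lemma total_dominated_graph_exists:
  assumes p: "sublinear p"
  obtains M where "dominated_graph p M" "(x\<^sub>0, p x\<^sub>0) \<in> M" "\<And>z. \<exists>a. (z, a) \<in> M"
proof -
  define \<G> where "\<G> = {G. dominated_graph p G \<and> (x\<^sub>0, p x\<^sub>0) \<in> G}"
  have "dominated_graph p {0}"
    using sublinear_zero[OF p] by (simp add: dominated_graph_def) (simp add: zero_prod_def)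
  moreover have "- p (- x\<^sub>0) \<le> p x\<^sub>0"
    using sublinear_add[OF p, of x\<^sub>0 "- x\<^sub>0"] sublinear_zero[OF p] by simp
  ultimately have line: "graph_extend {0} x\<^sub>0 (p x\<^sub>0) \<in> \<G>"
    unfolding \<G>_def using dominated_graph_extend[OF p, of "{0}" x\<^sub>0 "p x\<^sub>0"] in_graph_extend[of "{0}"]
    by (simp add: zero_prod_def)
  have "\<exists>U\<in>\<G>. \<forall>G\<in>C. G \<subseteq> U" if C: "C \<in> chains \<G>" for C
  proof (cases "C = {}")
    case True
    then show ?thesis using line by blast
  next
    case False
    have "C \<in> chains {G. dominated_graph p G}" and C\<G>: "C \<subseteq> \<G>"
      using C unfolding chains_def \<G>_def by auto
    then have "dominated_graph p (\<Union>C)"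
      using dominated_graph_Union_chain[OF False] by blast
    moreover have "(x\<^sub>0, p x\<^sub>0) \<in> \<Union>C"
      using False C\<G> unfolding \<G>_def by blast
    ultimately show ?thesis
      unfolding \<G>_def by blast
  qed
  then have "\<exists>M\<in>\<G>. \<forall>G\<in>\<G>. M \<subseteq> G \<longrightarrow> G = M"
    by (intro Zorn_Lemma2) blast
  then obtain M where M: "M \<in> \<G>" and max: "\<And>G. G \<in> \<G> \<Longrightarrow> M \<subseteq> G \<Longrightarrow> G = M"
    by blast
  have dom: "dominated_graph p M"
    using M unfolding \<G>_def by blast
  have "\<exists>a. (z, a) \<in> M" for z
  proof -
    obtain c where c: "\<And>x a. (x, a) \<in> M \<Longrightarrow> a - p (x - z) \<le> c \<and> c \<le> p (x + z) - a"
      using dominated_graph_extension_value[OF p dom] by blast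
    have "graph_extend M z c \<in> \<G>"
      using M dominated_graph_extend[OF p dom c] subset_graph_extend unfolding \<G>_def by blast
    then have "graph_extend M z c = M"
      using max subset_graph_extend by blast
    moreover have "(0, 0) \<in> M"
      using dom subspace_0 unfolding dominated_graph_def by (force simp: zero_prod_def)
    ultimately show ?thesis
      using in_graph_extend by metis
  qed
  then show thesis
    using that dom M unfolding \<G>_def by blast
qed

theorem hahn_banach_sublinear:
  assumes p: "sublinear p"
  obtains \<phi> where "linear \<phi>" "\<And>x. \<phi> x \<le> p x" "\<phi> x\<^sub>0 = p x\<^sub>0"
proof -
  obtain M where dom: "dominated_graph p M" and x0: "(x\<^sub>0, p x\<^sub>0) \<in> M" and total: "\<And>z. \<exists>a. (z, a) \<in> M"
    using total_dominated_graph_exists[OF p] by blast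
  define \<phi> where "\<phi> z = (THE a. (z, a) \<in> M)" for z
  have \<phi>: "(z, a) \<in> M \<longleftrightarrow> \<phi> z = a" for z a
    using total[of z] dominated_graph_unique[OF p dom] unfolding \<phi>_def by (metis theI)
  have sub: "subspace M" and below: "\<And>x a. (x, a) \<in> M \<Longrightarrow> a \<le> p x"
    using dom unfolding dominated_graph_def by auto
  have "linear \<phi>"
  proof
    show "\<phi> (x + y) = \<phi> x + \<phi> y" for x y
      using subspace_add[OF sub, of "(x, \<phi> x)" "(y, \<phi> y)"] \<phi> by simp
    show "\<phi> (r *\<^sub>R x) = r *\<^sub>R \<phi> x" for r x
      using subspace_scale[OF sub, of "(x, \<phi> x)" r] \<phi> by simp
  qed
  moreover have "\<phi> x \<le> p x" for x
    using below \<phi> by blast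
  moreover have "\<phi> x\<^sub>0 = p x\<^sub>0"
    using x0 \<phi> by blast
  ultimately show thesis
    using that by blast
qed

section \<open>Separability of the weak topology\<close>

lemma topspace_weak_topology [simp]: "topspace (weak_topology :: 'e::real_normed_vector topology) = UNIV"
proof -
  have "UNIV \<in> {f -` U | (f :: 'e \<Rightarrow> real) U. bounded_linear f \<and> open U}"
    using bounded_linear_zero by blast
  then show ?thesis
    unfolding weak_topology_def topology_generated_by_topspace by blast
qed

lemma openin_weak_topology_vimage:
  fixes f :: "'e::real_normed_vector \<Rightarrow> real"
  assumes "bounded_linear f" "open U"
  shows "openin weak_topology (f -` U)"
  unfolding weak_topology_def by (rule topology_generated_by_Basis) (use assms in blast)

lemma openin_weak_topology_imp_open:
  assumes "openin (weak_topology :: 'e::real_normed_vector topology) U"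
  shows "open U"
proof -
  have "generate_topology_on {f -` U | (f :: 'e \<Rightarrow> real) U. bounded_linear f \<and> open U} U"
    using assms unfolding weak_topology_def by (rule openin_topology_generated_by)
  then show ?thesis
  proof induction
    case (Basis s)
    then obtain f :: "'e \<Rightarrow> real" and V where "s = f -` V" "bounded_linear f" "open V"
      by blast
    then show ?case
      using open_vimage linear_continuous_on by blast
  qed auto
qed

lemma continuous_map_into_weak_topology:
  fixes T :: "'a \<Rightarrow> 'e::real_normed_vector"
  assumes "continuous_map X euclidean T"
  shows "continuous_map X weak_topology T"
  using assms openin_weak_topology_imp_open unfolding continuous_map_def by auto

lemma infdist_greatest: "A \<noteq> {} \<Longrightarrow> (\<And>a. a \<in> A \<Longrightarrow> d \<le> dist x a) \<Longrightarrow> d \<le> infdist x A"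
  unfolding infdist_notempty by (rule cINF_greatest)

lemma infdist_add_le:
  fixes M :: "'a::real_normed_vector set"
  assumes M: "subspace M"
  shows "infdist (x + y) M \<le> infdist x M + infdist y M"
proof -
  have ne: "M \<noteq> {}"
    using subspace_0[OF M] by blast
  have "infdist (x + y) M - infdist x M \<le> dist y b" if "b \<in> M" for b
  proof -
    have "infdist (x + y) M \<le> dist x a + dist y b" if "a \<in> M" for a
      using infdist_le[OF subspace_add[OF M that \<open>b \<in> M\<close>], of "x + y"]
        norm_triangle_ineq[of "x - a" "y - b"]
      by (simp add: dist_norm add_diff_add)
    then have "infdist (x + y) M - dist y b \<le> infdist x M"
      by (intro infdist_greatest[OF ne]) force
    then show ?thesis by simp
  qed
  then have "infdist (x + y) M - infdist x M \<le> infdist y M"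
    by (intro infdist_greatest[OF ne])
  then show ?thesis by simp
qed

lemma infdist_scaleR:
  fixes M :: "'a::real_normed_vector set"
  assumes M: "subspace M" and "c \<ge> 0"
  shows "infdist (c *\<^sub>R x) M = c * infdist x M"
proof -
  have le: "infdist (c *\<^sub>R x) M \<le> c * infdist x M" if "c > 0" for c x
  proof -
    have "infdist (c *\<^sub>R x) M \<le> c * dist x a" if "a \<in> M" for a
      using infdist_le[OF subspace_scale[OF M that, of c], of "c *\<^sub>R x"] \<open>c > 0\<close>
      by (simp add: dist_norm flip: scaleR_diff_right)
    then have "infdist (c *\<^sub>R x) M / c \<le> dist x a" if "a \<in> M" for a
      using that \<open>c > 0\<close> by (simp add: field_simps)
    then have "infdist (c *\<^sub>R x) M / c \<le> infdist x M"
      using subspace_0[OF M] by (intro infdist_greatest) auto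
    then show ?thesis
      using \<open>c > 0\<close> by (simp add: field_simps)
  qed
  show ?thesis
  proof (cases "c = 0")
    case True
    then show ?thesis using subspace_0[OF M] by simp
  next
    case False
    then have "c > 0" using \<open>c \<ge> 0\<close> by simp
    have "c * infdist x M = c * infdist ((1 / c) *\<^sub>R (c *\<^sub>R x)) M"
      using \<open>c > 0\<close> by simp
    also have "\<dots> \<le> infdist (c *\<^sub>R x) M"
      using le[of "1 / c" "c *\<^sub>R x"] \<open>c > 0\<close> by (simp add: field_simps)
    finally show ?thesis
      using le[OF \<open>c > 0\<close>, of x] by simp
  qed
qed

lemma sublinear_infdist:
  fixes M :: "'a::real_normed_vector set"
  assumes "subspace M"
  shows "sublinear (\<lambda>x. infdist x M)"
  unfolding sublinear_def by (simp add: infdist_add_le[OF assms] infdist_scaleR[OF assms])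

lemma separating_functional:
  fixes M :: "'a::real_normed_vector set"
  assumes M: "subspace M" and x0: "x\<^sub>0 \<notin> closure M"
  obtains \<phi> :: "'a \<Rightarrow> real" where "bounded_linear \<phi>" "\<And>m. m \<in> M \<Longrightarrow> \<phi> m = 0" "\<phi> x\<^sub>0 > 0"
proof -
  define p where "p x = infdist x M" for x
  obtain \<phi> where \<phi>: "linear \<phi>" "\<And>x. \<phi> x \<le> p x" "\<phi> x\<^sub>0 = p x\<^sub>0"
    using hahn_banach_sublinear[OF sublinear_infdist[OF M]] unfolding p_def by metis
  have p_norm: "p x \<le> norm x" for x
    unfolding p_def using infdist_le[OF subspace_0[OF M], of x] by simp
  have "\<bar>\<phi> x\<bar> \<le> norm x" for x
    using \<phi>(2)[of x] \<phi>(2)[of "- x"] p_norm[of x] p_norm[of "- x"] linear_neg[OF \<phi>(1)] by simp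
  then have "bounded_linear \<phi>"
    using \<phi>(1) by (intro bounded_linear_intro[of _ 1]) (simp_all add: linear_add linear_scale)
  moreover have "\<phi> m = 0" if "m \<in> M" for m
    using \<phi>(2)[of m] \<phi>(2)[of "- m"] linear_neg[OF \<phi>(1)] subspace_neg[OF M that] that
    unfolding p_def by simp
  moreover have "p x\<^sub>0 > 0"
    using x0 in_closure_iff_infdist_zero[of M x\<^sub>0] subspace_0[OF M] infdist_nonneg[of x\<^sub>0 M]
    unfolding p_def by fastforce
  ultimately show thesis
    using that \<phi>(3) by simp
qed

lemma weak_closure_of_subspace:
  fixes M :: "'a::real_normed_vector set"
  assumes "subspace M"
  shows "weak_topology closure_of M \<subseteq> closure M"
proof
  fix x assume "x \<in> weak_topology closure_of M"
  show "x \<in> closure M"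
  proof (rule ccontr)
    assume "x \<notin> closure M"
    then obtain \<phi> :: "'a \<Rightarrow> real" where "bounded_linear \<phi>" "\<And>m. m \<in> M \<Longrightarrow> \<phi> m = 0" "\<phi> x > 0"
      using separating_functional[OF assms] by blast
    moreover have "openin weak_topology (\<phi> -` {0<..})"
      using \<open>bounded_linear \<phi>\<close> by (intro openin_weak_topology_vimage) auto
    moreover have "x \<in> \<phi> -` {0<..}"
      using \<open>\<phi> x > 0\<close> by simp
    ultimately have "\<exists>m. m \<in> M \<and> m \<in> \<phi> -` {0<..}"
      using \<open>x \<in> weak_topology closure_of M\<close> unfolding in_closure_of by presburger
    then obtain m where "m \<in> M" "\<phi> m > 0"
      by auto
    then show False
      using \<open>\<And>m. m \<in> M \<Longrightarrow> \<phi> m = 0\<close> by simp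
  qed
qed

definition rat_span :: "'a::real_vector set \<Rightarrow> 'a set" where
  "rat_span D = (\<lambda>l. \<Sum>(q, d) \<leftarrow> l. q *\<^sub>R d) ` lists (\<rat> \<times> D)"

lemma countable_rat_span: "countable D \<Longrightarrow> countable (rat_span D)"
  unfolding rat_span_def using countable_rat by auto

lemma subset_rat_span: "D \<subseteq> rat_span D"
proof
  fix d assume "d \<in> D"
  then have "[(1, d)] \<in> lists (\<rat> \<times> D)" by simp
  then show "d \<in> rat_span D"
    unfolding rat_span_def by (force intro: image_eqI[of _ _ "[(1, d)]"])
qed

lemma rat_span_add: "a \<in> rat_span D \<Longrightarrow> b \<in> rat_span D \<Longrightarrow> a + b \<in> rat_span D"
  unfolding rat_span_def by (auto intro!: image_eqI[where x = "_ @ _"])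

lemma rat_span_scaleR:
  assumes "q \<in> \<rat>" "a \<in> rat_span D"
  shows "q *\<^sub>R a \<in> rat_span D"
proof -
  obtain l where l: "l \<in> lists (\<rat> \<times> D)" "a = (\<Sum>(r, d) \<leftarrow> l. r *\<^sub>R d)"
    using assms(2) unfolding rat_span_def by blast
  have "map (\<lambda>(r, d). (q * r, d)) l \<in> lists (\<rat> \<times> D)"
    using l(1) assms(1) by (induction l) auto
  moreover have "q *\<^sub>R a = (\<Sum>(r, d) \<leftarrow> map (\<lambda>(r, d). (q * r, d)) l. r *\<^sub>R d)"
    unfolding l(2) by (induction l) (auto simp: scaleR_add_right)
  ultimately show ?thesis
    unfolding rat_span_def by blast
qed

lemma subspace_closure_rat_span:
  fixes D :: "'a::real_normed_vector set"
  shows "subspace (closure (rat_span D))"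
proof -
  let ?C = "closure (rat_span D)"
  have translate: "(\<lambda>x. x + y) ` ?C \<subseteq> ?C" if "(\<lambda>x. x + y) ` rat_span D \<subseteq> ?C" for y
    using that by (intro image_closure_subset continuous_intros) auto
  have add: "x + y \<in> ?C" if "x \<in> ?C" "y \<in> ?C" for x y
  proof -
    have "a + y \<in> ?C" if "a \<in> rat_span D" for a
    proof -
      have "(\<lambda>x. x + a) ` rat_span D \<subseteq> ?C"
        using rat_span_add[OF _ that] closure_subset by blast
      then show ?thesis
        using translate[of a] \<open>y \<in> ?C\<close> by (auto simp: add.commute)
    qed
    then show ?thesis
      using translate[of y] \<open>x \<in> ?C\<close> by blast
  qed
  have rat_scale: "q *\<^sub>R x \<in> ?C" if "q \<in> \<rat>" "x \<in> ?C" for q x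
    using image_closure_subset[of "rat_span D" "\<lambda>x. q *\<^sub>R x" ?C] rat_span_scaleR[OF \<open>q \<in> \<rat>\<close>]
      closure_subset \<open>x \<in> ?C\<close> continuous_on_scaleR[OF continuous_on_const continuous_on_id]
    by force
  have scale: "r *\<^sub>R x \<in> ?C" if "x \<in> ?C" for r x
  \<comment> \<open>the scalars \<open>r\<close> with \<open>r *\<^sub>R x \<in> ?C\<close> form a closed set containing \<open>\<rat>\<close>\<close>
  proof -
    have "closed ((\<lambda>r. r *\<^sub>R x) -` ?C)"
      by (intro continuous_closed_vimage continuous_intros) simp
    then have "closure \<rat> \<subseteq> (\<lambda>r. r *\<^sub>R x) -` ?C"
      using rat_scale[OF _ that] by (intro closure_minimal) auto
    then show ?thesis
      using Rats_closure_real by blast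
  qed
  have "0 \<in> rat_span D"
    unfolding rat_span_def by (rule image_eqI[of _ _ "[]"]) simp_all
  then have "0 \<in> ?C"
    using closure_subset by blast
  then show ?thesis
    unfolding subspace_def by (intro conjI ballI allI) (simp_all add: add scale)
qed

lemma span_subset_closure_rat_span:
  fixes D :: "'a::real_normed_vector set"
  shows "span D \<subseteq> closure (rat_span D)"
  by (rule span_minimal[OF _ subspace_closure_rat_span]) (use subset_rat_span closure_subset in blast)

lemma separable_space_if_dense_span:
  fixes D :: "'a::real_normed_vector set"
  assumes "countable D" "closure (span D) = UNIV"
  shows "separable_space (euclidean :: 'a topology)"
proof -
  have "closure (span D) \<subseteq> closure (rat_span D)"
    using span_subset_closure_rat_span by (intro closure_minimal) auto
  then show ?thesis
    unfolding separable_space_def euclidean_closure_of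
    using assms countable_rat_span by (intro exI[of _ "rat_span D"]) auto
qed

lemma separable_space_weak_topology_imp_separable:
  assumes "separable_space (weak_topology :: 'a::real_normed_vector topology)"
  shows "separable_space (euclidean :: 'a topology)"
proof -
  obtain D where D: "countable D" "weak_topology closure_of D = (UNIV :: 'a set)"
    using assms unfolding separable_space_def by auto
  have "weak_topology closure_of D \<subseteq> weak_topology closure_of span D"
    by (intro closure_of_mono span_superset)
  also have "\<dots> \<subseteq> closure (span D)"
    by (intro weak_closure_of_subspace subspace_span)
  finally show ?thesis
    using D by (intro separable_space_if_dense_span) auto
qed

section \<open>The spaces \<open>C\<^sub>p(X)\<close>\<close>

lemma topspace_Cp: "topspace (Cp X) = {u \<in> topspace X \<rightarrow>\<^sub>E UNIV. continuous_map X euclideanreal u}"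
  unfolding Cp_def by auto

lemma continuous_map_Cp_eval:
  "x \<in> topspace X \<Longrightarrow> continuous_map (Cp X) euclideanreal (\<lambda>u. u x)"
  unfolding Cp_def by (intro continuous_map_from_subtopology continuous_map_product_projection)

lemma continuous_map_Cp_compose:
  assumes g: "continuous_map Y X g"
  shows "continuous_map (Cp X) (Cp Y) (\<lambda>u. restrict (u \<circ> g) (topspace Y))"
proof -
  have gY: "g y \<in> topspace X" if "y \<in> topspace Y" for y
    using g that by (simp add: continuous_map_def Pi_iff)
  have "continuous_map (Cp X) (product_topology (\<lambda>_. euclideanreal) (topspace Y))
          (\<lambda>u. restrict (u \<circ> g) (topspace Y))"
    unfolding continuous_map_componentwise
    using continuous_map_Cp_eval[OF gY] by auto
  moreover have "continuous_map Y euclideanreal (restrict (u \<circ> g) (topspace Y))"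
    if "u \<in> topspace (Cp X)" for u
    using that continuous_map_compose[OF g] unfolding topspace_Cp
    by (auto intro: continuous_map_eq)
  ultimately show ?thesis
    unfolding Cp_def[of Y] by (auto intro: continuous_map_into_subtopology)
qed

lemma homeomorphic_space_Cp:
  assumes "X homeomorphic_space Y"
  shows "Cp X homeomorphic_space Cp Y"
proof -
  obtain f g where "homeomorphic_maps X Y f g"
    using assms unfolding homeomorphic_space_def by blast
  then have f: "continuous_map X Y f" and g: "continuous_map Y X g"
    and gf: "\<And>x. x \<in> topspace X \<Longrightarrow> g (f x) = x" and fg: "\<And>y. y \<in> topspace Y \<Longrightarrow> f (g y) = y"
    unfolding homeomorphic_maps_def by auto
  have fX: "f x \<in> topspace Y" if "x \<in> topspace X" for x
    using f that by (simp add: continuous_map_def Pi_iff)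
  have gY: "g y \<in> topspace X" if "y \<in> topspace Y" for y
    using g that by (simp add: continuous_map_def Pi_iff)
  have inv1: "restrict (restrict (u \<circ> g) (topspace Y) \<circ> f) (topspace X) = u" if "u \<in> topspace (Cp X)" for u
  proof -
    have "restrict (restrict (u \<circ> g) (topspace Y) \<circ> f) (topspace X) = restrict u (topspace X)"
      using fX gf by (intro restrict_ext) simp
    moreover have "restrict u (topspace X) = u"
      using that by (intro extensional_restrict) (simp add: topspace_Cp PiE_def)
    ultimately show ?thesis by simp
  qed
  have inv2: "restrict (restrict (v \<circ> f) (topspace X) \<circ> g) (topspace Y) = v" if "v \<in> topspace (Cp Y)" for v
  proof -
    have "restrict (restrict (v \<circ> f) (topspace X) \<circ> g) (topspace Y) = restrict v (topspace Y)"
      using gY fg by (intro restrict_ext) simp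
    moreover have "restrict v (topspace Y) = v"
      using that by (intro extensional_restrict) (simp add: topspace_Cp PiE_def)
    ultimately show ?thesis by simp
  qed
  have "homeomorphic_maps (Cp X) (Cp Y)
      (\<lambda>u. restrict (u \<circ> g) (topspace Y)) (\<lambda>v. restrict (v \<circ> f) (topspace X))"
    unfolding homeomorphic_maps_def
    by (intro conjI ballI continuous_map_Cp_compose f g) (simp_all add: inv1 inv2)
  then show ?thesis
    unfolding homeomorphic_space_def by blast
qed

lemma second_countable_euclidean: "second_countable (euclidean :: 'a::second_countable_topology topology)"
proof -
  obtain \<B> :: "'a set set" where "countable \<B>" "topological_basis \<B>"
    using ex_countable_basis by blast
  then show ?thesis
    unfolding second_countable_def
  proof (intro exI[of _ \<B>] conjI allI impI ballI)
    show "openin euclidean V" if "V \<in> \<B>" for V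
      using \<open>topological_basis \<B>\<close> that by (simp add: topological_basis_open)
    show "\<exists>V\<in>\<B>. x \<in> V \<and> V \<subseteq> U" if "openin euclidean U \<and> x \<in> U" for U x
      using topological_basisE[OF \<open>topological_basis \<B>\<close>, of U x] that by (metis open_openin)
  qed
qed

lemma continuous_map_product_eval:
  "continuous_map (product_topology (\<lambda>_. euclidean :: 'b::topological_space topology) I) euclidean (\<lambda>x. x j)"
proof (cases "j \<in> I")
  case True
  then show ?thesis
    by (rule continuous_map_product_projection)
next
  case False
  then have eq: "undefined = x j" if "x \<in> topspace (product_topology (\<lambda>_. euclidean :: 'b topology) I)" for x
    using that by (simp add: PiE_def extensional_def)
  have "continuous_map (product_topology (\<lambda>_. euclidean :: 'b topology) I) euclidean (\<lambda>x. undefined :: 'b)"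
    by simp
  then show ?thesis
    using eq by (rule continuous_map_eq)
qed

text \<open>A countable power of a second countable space is a retract of its power indexed by \<open>nat\<close>.\<close>
lemma second_countable_product_topology:
  assumes I: "countable I"
  shows "second_countable (product_topology (\<lambda>_. euclidean :: 'b::second_countable_topology topology) I)"
proof (rule second_countable_retraction_map_image)
  let ?r = "\<lambda>u :: nat \<Rightarrow> 'b. restrict (\<lambda>i. u (to_nat_on I i)) I"
  let ?s = "\<lambda>x :: 'a \<Rightarrow> 'b. \<lambda>n. x (from_nat_into I n)"
  have "continuous_map euclidean (product_topology (\<lambda>_. euclidean) I) ?r"
    unfolding continuous_map_componentwise euclidean_product_topology
    by (simp add: continuous_map_product_projection image_subset_iff)
  moreover have "continuous_map (product_topology (\<lambda>_. euclidean) I) euclidean ?s"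
  proof (subst euclidean_product_topology[symmetric], unfold continuous_map_componentwise_UNIV, intro allI)
    fix n
    show "continuous_map (product_topology (\<lambda>_. euclidean) I) euclidean (\<lambda>x. x (from_nat_into I n))"
      by (rule continuous_map_product_eval)
  qed
  moreover have "?r (?s x) = x" if "x \<in> topspace (product_topology (\<lambda>_. euclidean) I)" for x
  proof -
    have "?r (?s x) = restrict x I"
      using I by (intro restrict_ext) (simp add: from_nat_into_to_nat_on)
    also have "\<dots> = x"
      using that by (intro extensional_restrict) (simp add: PiE_def)
    finally show ?thesis .
  qed
  ultimately show "retraction_map euclidean (product_topology (\<lambda>_. euclidean) I) ?r"
    unfolding retraction_map_def retraction_maps_def by (intro exI[of _ ?s] conjI ballI)
  show "second_countable (euclidean :: (nat \<Rightarrow> 'b) topology)"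
    by (rule second_countable_euclidean)
qed

lemma separable_space_Cp: "countable (topspace X) \<Longrightarrow> separable_space (Cp X)"
  unfolding Cp_def
  by (intro second_countable_imp_separable_space second_countable_subtopology
      second_countable_product_topology)

lemma metrizable_space_Cp: "countable (topspace X) \<Longrightarrow> metrizable_space (Cp X)"
  unfolding Cp_def
  by (intro metrizable_space_subtopology)
    (auto simp: metrizable_space_product_topology metrizable_space_euclidean
      intro: countable_subset)

section \<open>The convergent sequence\<close>

definition conv_seq_pt :: "nat \<Rightarrow> real" where
  "conv_seq_pt n = 1 / real (Suc n)"

lemma conv_seq_pt_pos [simp]: "0 < conv_seq_pt n"
  unfolding conv_seq_pt_def by simp

lemma abs_conv_seq_pt [simp]: "\<bar>conv_seq_pt n\<bar> = conv_seq_pt n"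
  using conv_seq_pt_pos[of n] by linarith

lemma conv_seq_pt_less_iff [simp]: "conv_seq_pt m < conv_seq_pt n \<longleftrightarrow> n < m"
  unfolding conv_seq_pt_def by (simp add: divide_simps)

lemma conv_seq_pt_le_iff [simp]: "conv_seq_pt m \<le> conv_seq_pt n \<longleftrightarrow> n \<le> m"
  by (meson conv_seq_pt_less_iff not_le)

lemma conv_seq_pt_eq_iff [simp]: "conv_seq_pt m = conv_seq_pt n \<longleftrightarrow> m = n"
  unfolding conv_seq_pt_def by (auto simp: divide_simps)

lemma inv_conv_seq_pt [simp]: "inv conv_seq_pt (conv_seq_pt n) = n"
  by (simp add: inj_def)

lemma conv_seq_pt_ne_zero [simp]: "conv_seq_pt n \<noteq> 0"
  using conv_seq_pt_pos[of n] by linarith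

lemma LIMSEQ_conv_seq_pt: "conv_seq_pt \<longlonglongrightarrow> 0"
  unfolding conv_seq_pt_def using LIMSEQ_inverse_real_of_nat by (simp add: inverse_eq_divide)

lemma conv_seq_eq: "conv_seq = top_of_set (insert 0 (range conv_seq_pt))"
proof -
  have "{1 / real n | n. n \<ge> 1} = range conv_seq_pt"
  proof (intro equalityI subsetI)
    fix x assume "x \<in> {1 / real n | n. n \<ge> 1}"
    then obtain n where "n \<ge> 1" "x = 1 / real n"
      by blast
    then have "x = conv_seq_pt (n - 1)"
      unfolding conv_seq_pt_def by (simp add: Suc_diff_1)
    then show "x \<in> range conv_seq_pt"
      by blast
  next
    fix x assume "x \<in> range conv_seq_pt"
    then obtain n where "x = conv_seq_pt n"
      by blast
    then show "x \<in> {1 / real n | n. n \<ge> 1}"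
      unfolding conv_seq_pt_def by (intro CollectI exI[of _ "Suc n"]) simp
  qed
  then show ?thesis
    unfolding conv_seq_def by simp
qed

lemma topspace_conv_seq: "topspace conv_seq = insert 0 (range conv_seq_pt)"
  unfolding conv_seq_eq by simp

lemma not_islimpt_conv_seq_pt: "\<not> conv_seq_pt m islimpt insert 0 (range conv_seq_pt)"
proof
  assume "conv_seq_pt m islimpt insert 0 (range conv_seq_pt)"
  moreover have "insert 0 (range conv_seq_pt) \<subseteq> {..conv_seq_pt (Suc m)} \<union> conv_seq_pt ` {..m}"
    by (auto simp: less_eq_real_def not_le)
  ultimately have "conv_seq_pt m islimpt {..conv_seq_pt (Suc m)}"
    using islimpt_subset islimpt_Un islimpt_finite by (metis finite_imageI finite_atMost)
  then have "conv_seq_pt m \<in> {..conv_seq_pt (Suc m)}"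
    using closed_limpt[of "{..conv_seq_pt (Suc m)}"] closed_atMost by blast
  then show False
    by simp
qed

lemma continuous_map_conv_seq_iff:
  "continuous_map conv_seq euclideanreal f \<longleftrightarrow> (\<lambda>n. f (conv_seq_pt n)) \<longlonglongrightarrow> f 0"
proof
  assume "continuous_map conv_seq euclideanreal f"
  then have "continuous_on (insert 0 (range conv_seq_pt)) f"
    by (simp add: conv_seq_eq)
  then show "(\<lambda>n. f (conv_seq_pt n)) \<longlonglongrightarrow> f 0"
    by (rule continuous_on_tendsto_compose[OF _ LIMSEQ_conv_seq_pt]) auto
next
  assume lim: "(\<lambda>n. f (conv_seq_pt n)) \<longlonglongrightarrow> f 0"
  have "continuous (at x within insert 0 (range conv_seq_pt)) f"
    if x: "x \<in> insert 0 (range conv_seq_pt)" for x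
  proof (cases "x = 0")
    case True
    show ?thesis
      unfolding continuous_within_eps_delta
    proof (intro allI impI)
      fix e :: real assume "e > 0"
      then obtain N where N: "\<And>n. n \<ge> N \<Longrightarrow> dist (f (conv_seq_pt n)) (f 0) < e"
        using lim unfolding lim_sequentially by blast
      have "dist (f y) (f x) < e"
        if y: "y \<in> insert 0 (range conv_seq_pt)" and d: "dist y x < conv_seq_pt N" for y
      proof (cases "y = 0")
        case False
        then obtain n where "y = conv_seq_pt n"
          using y by blast
        then have "N \<le> n"
          using d \<open>x = 0\<close> by (simp add: dist_real_def)
        then show ?thesis
          using N \<open>y = conv_seq_pt n\<close> \<open>x = 0\<close> by simp
      qed (use \<open>e > 0\<close> \<open>x = 0\<close> in simp)
      then show "\<exists>d>0. \<forall>y\<in>insert 0 (range conv_seq_pt). dist y x < d \<longrightarrow> dist (f y) (f x) < e"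
        using conv_seq_pt_pos by blast
    qed
  next
    case False
    then obtain m where "x = conv_seq_pt m"
      using x by blast
    then show ?thesis
      using not_islimpt_conv_seq_pt trivial_limit_within continuous_trivial_limit by metis
  qed
  then show "continuous_map conv_seq euclideanreal f"
    unfolding conv_seq_eq by (simp add: continuous_on_eq_continuous_within)
qed

text \<open>The staircases form a closed copy of the Baire space inside \<open>C\<^sub>p\<close>: at the point
  \<open>conv_seq_pt n\<close> a staircase takes one of the finitely many levels \<open>conv_seq_pt 0, \<dots>, conv_seq_pt n\<close>
  and it descends along the sequence. As \<open>f 0 = 0\<close>, every level is occupied by only finitely many
  indices, and these multiplicities code \<open>f\<close>.\<close>
definition staircase :: "(real \<Rightarrow> real) set" where
  "staircase = {f \<in> topspace (Cp conv_seq). f 0 = 0 \<and>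
     (\<forall>n. f (conv_seq_pt n) \<in> conv_seq_pt ` {..n}) \<and>
     (\<forall>n. f (conv_seq_pt (Suc n)) \<le> f (conv_seq_pt n))}"

definition level_count :: "nat \<Rightarrow> (real \<Rightarrow> real) \<Rightarrow> nat" where
  "level_count k f = card {n. f (conv_seq_pt n) = conv_seq_pt k}"

lemma closedin_staircase: "closedin (Cp conv_seq) staircase"
proof -
  have eval: "continuous_map (Cp conv_seq) euclideanreal (\<lambda>f. f x)" if "x \<in> insert 0 (range conv_seq_pt)" for x
    using that by (intro continuous_map_Cp_eval) (simp add: topspace_conv_seq)
  have "closedin (Cp conv_seq) {f \<in> topspace (Cp conv_seq). f 0 \<in> {0}}"
    by (intro closedin_continuous_map_preimage[where Y = euclideanreal] eval) auto
  moreover have "closedin (Cp conv_seq) {f \<in> topspace (Cp conv_seq). f (conv_seq_pt n) \<in> conv_seq_pt ` {..n}}" for n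
    by (intro closedin_continuous_map_preimage[where Y = euclideanreal] eval) (auto intro: finite_imp_closed)
  moreover have "closedin (Cp conv_seq)
      {f \<in> topspace (Cp conv_seq). f (conv_seq_pt (Suc n)) - f (conv_seq_pt n) \<in> {..0}}" for n
    by (intro closedin_continuous_map_preimage[where Y = euclideanreal] continuous_map_diff eval) auto
  ultimately have "closedin (Cp conv_seq)
      ({f \<in> topspace (Cp conv_seq). f 0 \<in> {0}} \<inter>
       (\<Inter>n. {f \<in> topspace (Cp conv_seq). f (conv_seq_pt n) \<in> conv_seq_pt ` {..n}}) \<inter>
       (\<Inter>n. {f \<in> topspace (Cp conv_seq). f (conv_seq_pt (Suc n)) - f (conv_seq_pt n) \<in> {..0}}))"
    by (intro closedin_Int closedin_Inter) auto
  moreover have "staircase =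
      {f \<in> topspace (Cp conv_seq). f 0 \<in> {0}} \<inter>
      (\<Inter>n. {f \<in> topspace (Cp conv_seq). f (conv_seq_pt n) \<in> conv_seq_pt ` {..n}}) \<inter>
      (\<Inter>n. {f \<in> topspace (Cp conv_seq). f (conv_seq_pt (Suc n)) - f (conv_seq_pt n) \<in> {..0}})"
    unfolding staircase_def by auto
  ultimately show ?thesis
    by simp
qed

lemma staircaseD:
  assumes "f \<in> staircase"
  shows "f \<in> topspace (Cp conv_seq)" "f 0 = 0" "f (conv_seq_pt n) \<in> conv_seq_pt ` {..n}"
  using assms unfolding staircase_def by blast+

lemma staircase_antimono:
  assumes "f \<in> staircase" "m \<le> n"
  shows "f (conv_seq_pt n) \<le> f (conv_seq_pt m)"
proof -
  have "decseq (\<lambda>n. f (conv_seq_pt n))"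
    using assms(1) unfolding staircase_def by (intro decseq_SucI) blast
  then show ?thesis
    using assms(2) by (simp add: decseq_def)
qed

lemma staircase_tendsto_zero:
  assumes "f \<in> staircase"
  shows "(\<lambda>n. f (conv_seq_pt n)) \<longlonglongrightarrow> 0"
  using assms continuous_map_conv_seq_iff unfolding staircase_def topspace_Cp by auto

lemma continuous_map_locally_constant:
  fixes f :: "'a \<Rightarrow> 'b::topological_space"
  assumes "\<And>x. x \<in> topspace X \<Longrightarrow> \<exists>U. openin X U \<and> x \<in> U \<and> (\<forall>y\<in>U. f y = f x)"
  shows "continuous_map X euclidean f"
  unfolding continuous_map_def
proof (intro conjI allI impI)
  fix V :: "'b set" assume "openin euclidean V"
  show "openin X {x \<in> topspace X. f x \<in> V}"
  proof (subst openin_subopen, intro ballI)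
    fix x assume x: "x \<in> {x \<in> topspace X. f x \<in> V}"
    then obtain U where U: "openin X U" "x \<in> U" "\<forall>y\<in>U. f y = f x"
      using assms by blast
    then have "U \<subseteq> {x \<in> topspace X. f x \<in> V}"
      using x openin_subset by fastforce
    then show "\<exists>T. openin X T \<and> x \<in> T \<and> T \<subseteq> {x \<in> topspace X. f x \<in> V}"
      using U by blast
  qed
qed auto

text \<open>The values of a staircase at the first \<open>N + 1\<close> points lie in the finite set
  \<open>conv_seq_pt ` {..N}\<close>, so they are locally constant on \<open>staircase\<close>.\<close>
lemma staircase_locally_agree:
  assumes f: "f \<in> topspace (Cp conv_seq)"
  obtains U where "openin (Cp conv_seq) U" "f \<in> U"
    "\<And>g n. g \<in> staircase \<Longrightarrow> g \<in> U \<Longrightarrow> n \<le> N \<Longrightarrow> g (conv_seq_pt n) = f (conv_seq_pt n)"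
proof
  define F where "F = conv_seq_pt ` {..N}"
  define V where "V n = {g \<in> topspace (Cp conv_seq). g (conv_seq_pt n) \<notin> F - {f (conv_seq_pt n)}}" for n
  have "closed (F - {c})" for c
    unfolding F_def by (intro finite_imp_closed) auto
  then have "openin (Cp conv_seq) (V n)" for n
    unfolding V_def Compl_iff[symmetric]
    by (intro openin_continuous_map_preimage[where Y = euclideanreal] continuous_map_Cp_eval)
      (simp_all add: topspace_conv_seq closed_open)
  then show "openin (Cp conv_seq) (\<Inter>n\<in>{..N}. V n)"
    by (intro openin_INT2) auto
  show "f \<in> (\<Inter>n\<in>{..N}. V n)"
    using f unfolding V_def by simp
  fix g n assume g: "g \<in> staircase" "g \<in> (\<Inter>n\<in>{..N}. V n)" and "n \<le> N"
  have "g (conv_seq_pt n) \<in> conv_seq_pt ` {..n}"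
    using g(1) by (rule staircaseD)
  also have "\<dots> \<subseteq> F"
    unfolding F_def using \<open>n \<le> N\<close> by auto
  finally have "g (conv_seq_pt n) \<in> F" .
  moreover have "g \<in> V n"
    using g(2) \<open>n \<le> N\<close> by simp
  ultimately show "g (conv_seq_pt n) = f (conv_seq_pt n)"
    unfolding V_def by simp
qed

lemma staircase_level_count_eq:
  assumes f: "f \<in> staircase" and g: "g \<in> staircase" and N: "f (conv_seq_pt N) < conv_seq_pt k"
    and agree: "\<And>n. n \<le> N \<Longrightarrow> g (conv_seq_pt n) = f (conv_seq_pt n)"
  shows "level_count k g = level_count k f"
proof -
  have "g (conv_seq_pt n) = conv_seq_pt k \<longleftrightarrow> f (conv_seq_pt n) = conv_seq_pt k" for n
  proof (cases "n \<le> N")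
    case True
    then show ?thesis
      using agree by simp
  next
    case False
    then have "N \<le> n" by simp
    have "g (conv_seq_pt n) \<le> g (conv_seq_pt N)"
      using g \<open>N \<le> n\<close> by (rule staircase_antimono)
    also have "\<dots> = f (conv_seq_pt N)"
      by (rule agree) simp
    finally have "g (conv_seq_pt n) < conv_seq_pt k"
      using N by simp
    moreover have "f (conv_seq_pt n) < conv_seq_pt k"
      using staircase_antimono[OF f \<open>N \<le> n\<close>] N by simp
    ultimately show ?thesis
      by auto
  qed
  then show ?thesis
    unfolding level_count_def by simp
qed

lemma continuous_map_level_count:
  "continuous_map (subtopology (Cp conv_seq) staircase) euclideanreal (\<lambda>f. real (level_count k f))"
proof (rule continuous_map_locally_constant)
  fix f assume "f \<in> topspace (subtopology (Cp conv_seq) staircase)"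
  then have f: "f \<in> staircase"
    by simp
  have "\<forall>\<^sub>F n in sequentially. f (conv_seq_pt n) < conv_seq_pt k"
    using order_tendstoD(2)[OF staircase_tendsto_zero[OF f]] by simp
  then obtain N where "\<forall>n\<ge>N. f (conv_seq_pt n) < conv_seq_pt k"
    unfolding eventually_sequentially by blast
  then have N: "f (conv_seq_pt N) < conv_seq_pt k"
    by simp
  obtain U where U: "openin (Cp conv_seq) U" "f \<in> U"
    and agree: "\<And>g n. g \<in> staircase \<Longrightarrow> g \<in> U \<Longrightarrow> n \<le> N \<Longrightarrow> g (conv_seq_pt n) = f (conv_seq_pt n)"
    using staircase_locally_agree[OF staircaseD(1)[OF f]] by blast
  show "\<exists>V. openin (subtopology (Cp conv_seq) staircase) V \<and> f \<in> V \<and>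
      (\<forall>g\<in>V. real (level_count k g) = real (level_count k f))"
  proof (intro exI[of _ "staircase \<inter> U"] conjI ballI)
    show "openin (subtopology (Cp conv_seq) staircase) (staircase \<inter> U)"
      using U(1) by (rule openin_subtopology_Int2)
    show "f \<in> staircase \<inter> U"
      using f U(2) by (rule IntI)
    show "real (level_count k g) = real (level_count k f)" if "g \<in> staircase \<inter> U" for g
    proof -
      have g: "g \<in> staircase" "g \<in> U"
        using that by auto
      have "level_count k g = level_count k f"
        using f g(1) N by (rule staircase_level_count_eq) (rule agree[OF g])
      then show ?thesis
        by simp
    qed
  qed
qed

lemma strict_mono_block_index:
  fixes c :: "nat \<Rightarrow> nat"
  assumes c: "strict_mono c" "c 0 = 0"
  obtains i where "\<And>n k. i n = k \<longleftrightarrow> c k \<le> n \<and> n < c (Suc k)"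
proof
  define i where "i n = (LEAST k. n < c (Suc k))" for n
  fix n k
  have ex: "n < c (Suc n)"
    using strict_mono_imp_increasing[OF c(1), of "Suc n"] by simp
  show "i n = k \<longleftrightarrow> c k \<le> n \<and> n < c (Suc k)"
  proof
    assume "i n = k"
    then have "n < c (Suc k)"
      unfolding i_def using LeastI[of "\<lambda>k. n < c (Suc k)", OF ex] by simp
    moreover have "c k \<le> n"
    proof (cases k)
      case (Suc j)
      then have "\<not> n < c (Suc j)"
        using \<open>i n = k\<close> not_less_Least[of j "\<lambda>k. n < c (Suc k)"] unfolding i_def by simp
      then show ?thesis
        using Suc by simp
    qed (simp add: c(2))
    ultimately show "c k \<le> n \<and> n < c (Suc k)"
      by simp
  next
    assume k: "c k \<le> n \<and> n < c (Suc k)"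
    have "k \<le> j" if "n < c (Suc j)" for j
    proof (rule ccontr)
      assume "\<not> k \<le> j"
      then have "c (Suc j) \<le> c k"
        using strict_mono_less_eq[OF c(1)] by simp
      then show False
        using k that by simp
    qed
    then show "i n = k"
      unfolding i_def using k by (intro Least_equality) auto
  qed
qed

lemma staircase_of_levels:
  fixes lev :: "nat \<Rightarrow> nat"
  assumes "mono lev" "\<And>n. lev n \<le> n" "filterlim lev sequentially sequentially"
  obtains f where "f \<in> staircase" "\<And>n. f (conv_seq_pt n) = conv_seq_pt (lev n)"
proof
  define f where "f = restrict (\<lambda>x. if x = 0 then 0 else conv_seq_pt (lev (inv conv_seq_pt x)))
    (insert 0 (range conv_seq_pt))"
  show f_pt: "f (conv_seq_pt n) = conv_seq_pt (lev n)" for n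
    unfolding f_def by simp
  have f_0: "f 0 = 0"
    unfolding f_def by simp
  have "(\<lambda>n. conv_seq_pt (lev n)) \<longlonglongrightarrow> 0"
    using assms(3) by (rule filterlim_compose[OF LIMSEQ_conv_seq_pt])
  then have "f \<in> topspace (Cp conv_seq)"
    unfolding topspace_Cp topspace_conv_seq continuous_map_conv_seq_iff f_pt f_0
    by (simp add: f_def)
  then show "f \<in> staircase"
    unfolding staircase_def using f_0 assms(1,2) by (simp add: f_pt monoD)
qed

text \<open>Level \<open>k\<close> is occupied by the block of indices \<open>[c k, c (Suc k))\<close> of length \<open>Suc (m k)\<close>.\<close>
lemma staircase_level_count_onto:
  fixes m :: "nat \<Rightarrow> nat"
  obtains f where "f \<in> staircase" "\<And>k. level_count k f = Suc (m k)"
proof -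
  define c where "c k = (\<Sum>i<k. Suc (m i))" for k
  have c_Suc: "c (Suc k) = c k + Suc (m k)" for k
    unfolding c_def by simp
  have "strict_mono c"
    unfolding strict_mono_Suc_iff c_Suc by simp
  moreover have "c 0 = 0"
    unfolding c_def by simp
  ultimately obtain lev where lev: "\<And>n k. lev n = k \<longleftrightarrow> c k \<le> n \<and> n < c (Suc k)"
    by (rule strict_mono_block_index) blast
  have "mono lev"
  proof
    fix n n' :: nat assume "n \<le> n'"
    show "lev n \<le> lev n'"
    proof (rule ccontr)
      assume "\<not> lev n \<le> lev n'"
      then have "c (Suc (lev n')) \<le> c (lev n)"
        using strict_mono_less_eq[OF \<open>strict_mono c\<close>] by simp
      then show False
        using lev[of n "lev n"] lev[of n' "lev n'"] \<open>n \<le> n'\<close> by simp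
    qed
  qed
  moreover have "lev n \<le> n" for n
    using strict_mono_imp_increasing[OF \<open>strict_mono c\<close>, of "lev n"] lev[of n "lev n"] by simp
  moreover have "filterlim lev sequentially sequentially"
    unfolding filterlim_at_top eventually_sequentially
  proof (intro allI)
    fix k
    have "lev (c k) = k"
      using lev c_Suc by simp
    then show "\<exists>N. \<forall>n\<ge>N. k \<le> lev n"
      using \<open>mono lev\<close> by (metis monoD)
  qed
  ultimately obtain f where f: "f \<in> staircase" "\<And>n. f (conv_seq_pt n) = conv_seq_pt (lev n)"
    by (rule staircase_of_levels) blast
  have "level_count k f = Suc (m k)" for k
  proof -
    have "{n. f (conv_seq_pt n) = conv_seq_pt k} = {c k..<c (Suc k)}"
      unfolding f(2) using lev by auto
    then show ?thesis
      unfolding level_count_def by (simp add: c_Suc)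
  qed
  then show thesis
    using that f(1) by blast
qed

lemma Cp_conv_seq_codes_sequences:
  "\<exists>\<Psi> :: nat \<Rightarrow> (real \<Rightarrow> real) \<Rightarrow> real.
     (\<forall>k. continuous_map (Cp conv_seq) euclideanreal (\<Psi> k)) \<and>
     (\<forall>m. \<exists>f\<in>topspace (Cp conv_seq). \<forall>k. \<Psi> k f = real (m k))"
proof -
  have normal: "normal_space (Cp conv_seq)"
    by (intro metrizable_imp_normal_space metrizable_space_Cp) (simp add: topspace_conv_seq)
  have "\<exists>h. continuous_map (Cp conv_seq) euclideanreal h \<and>
      (\<forall>f\<in>staircase. h f = real (level_count k f) - 1)" for k
  proof -
    have "continuous_map (subtopology (Cp conv_seq) staircase) euclideanreal
        (\<lambda>f. real (level_count k f) - 1)"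
      by (intro continuous_map_diff continuous_map_level_count continuous_map_const[THEN iffD2]) simp
    then obtain h where "continuous_map (Cp conv_seq) euclideanreal h"
      "\<And>f. f \<in> staircase \<Longrightarrow> h f = real (level_count k f) - 1"
      using Tietze_extension_realinterval[OF normal closedin_staircase, of UNIV] by auto
    then show ?thesis
      by blast
  qed
  then obtain \<Psi> where \<Psi>: "\<And>k. continuous_map (Cp conv_seq) euclideanreal (\<Psi> k)"
    "\<And>k f. f \<in> staircase \<Longrightarrow> \<Psi> k f = real (level_count k f) - 1"
    by metis
  have "\<exists>f\<in>topspace (Cp conv_seq). \<forall>k. \<Psi> k f = real (m k)" for m
  proof -
    obtain f where f: "f \<in> staircase" "\<And>k. level_count k f = Suc (m k)"
      by (rule staircase_level_count_onto[of m]) blast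
    then have "\<Psi> k f = real (m k)" for k
      using \<Psi>(2)[OF f(1)] by simp
    then show ?thesis
      using staircaseD(1)[OF f(1)] by blast
  qed
  then show ?thesis
    using \<Psi>(1) by (intro exI[of _ \<Psi>] conjI allI)
qed

section \<open>Continuous maps onto separable Banach spaces\<close>

lemma continuous_map_suminf:
  fixes f :: "nat \<Rightarrow> 'a \<Rightarrow> 'b::banach"
  assumes cont: "\<And>k. continuous_map X euclidean (f k)"
    and bound: "\<And>k x. x \<in> topspace X \<Longrightarrow> norm (f k x) \<le> M k"
    and M: "summable M"
  shows "continuous_map X euclidean (\<lambda>x. \<Sum>k. f k x)"
proof -
  have summable_f: "summable (\<lambda>k. f k x)" if "x \<in> topspace X" for x
    using M by (rule summable_comparison_test') (rule bound[OF that])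
  have tail: "norm ((\<Sum>k. f k x) - (\<Sum>k<n. f k x)) \<le> (\<Sum>k. M (k + n))" if "x \<in> topspace X" for x n
  proof -
    have "(\<Sum>k. f k x) - (\<Sum>k<n. f k x) = (\<Sum>k. f (k + n) x)"
      using suminf_split_initial_segment[OF summable_f[OF that], of n] by simp
    also have "norm \<dots> \<le> (\<Sum>k. M (k + n))"
      using bound[OF that] summable_ignore_initial_segment[OF M] by (intro norm_suminf_le) auto
    finally show ?thesis .
  qed
  have "continuous_map X Met_TC.mtopology (\<lambda>x. \<Sum>k. f k x)"
  proof (rule Met_TC.continuous_map_uniform_limit[where F = sequentially and f = "\<lambda>n x. \<Sum>k<n. f k x"])
    show "\<forall>\<^sub>F n in sequentially. continuous_map X Met_TC.mtopology (\<lambda>x. \<Sum>k<n. f k x)"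
      using cont by (simp add: continuous_map_sum)
    fix \<epsilon> :: real assume "0 < \<epsilon>"
    then obtain N where N: "\<And>n. n \<ge> N \<Longrightarrow> norm (\<Sum>k. M (k + n)) < \<epsilon>"
      using suminf_exist_split[OF _ M] by blast
    have "dist (\<Sum>k<n. f k x) (\<Sum>k. f k x) < \<epsilon>" if "n \<ge> N" "x \<in> topspace X" for n x
      using tail[OF that(2), of n] N[OF that(1)] by (simp add: dist_norm norm_minus_commute)
    then show "\<forall>\<^sub>F n in sequentially. \<forall>x\<in>topspace X. (\<Sum>k. f k x) \<in> UNIV \<and> dist (\<Sum>k<n. f k x) (\<Sum>k. f k x) < \<epsilon>"
      unfolding eventually_sequentially by blast
  qed simp
  then show ?thesis
    by simp
qed

definition linear_interpolation :: "(nat \<Rightarrow> 'a::real_vector) \<Rightarrow> real \<Rightarrow> 'a" where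
  "linear_interpolation v t =
    (let s = max 0 t; n = nat \<lfloor>s\<rfloor>; r = s - real n in (1 - r) *\<^sub>R v n + r *\<^sub>R v (Suc n))"

lemma linear_interpolation_nonpos: "t \<le> 0 \<Longrightarrow> linear_interpolation v t = v 0"
  unfolding linear_interpolation_def Let_def by (simp add: max_def)

lemma linear_interpolation_segment:
  assumes "real n \<le> t" "t \<le> real n + 1"
  shows "linear_interpolation v t = (real n + 1 - t) *\<^sub>R v n + (t - real n) *\<^sub>R v (Suc n)"
proof (cases "t = real n + 1")
  case True
  then have "max 0 t = real (Suc n)"
    by simp
  moreover have "nat \<lfloor>real (Suc n)\<rfloor> = Suc n"
    by (simp only: floor_of_nat nat_int)
  ultimately show ?thesis
    unfolding linear_interpolation_def Let_def using True by (simp add: add.commute)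
next
  case False
  then have "\<lfloor>t\<rfloor> = int n" "max 0 t = t"
    using assms by (simp_all add: floor_eq_iff)
  then show ?thesis
    unfolding linear_interpolation_def Let_def by (simp add: algebra_simps)
qed

lemma linear_interpolation_of_nat [simp]: "linear_interpolation v (real n) = v n"
  using linear_interpolation_segment[of n "real n" v] by simp

lemma norm_linear_interpolation_le:
  fixes v :: "nat \<Rightarrow> 'a::real_normed_vector"
  assumes "\<And>n. norm (v n) \<le> B"
  shows "norm (linear_interpolation v t) \<le> B"
proof -
  define s where "s = max 0 t"
  define n where "n = nat \<lfloor>s\<rfloor>"
  define r where "r = s - real n"
  have r: "0 \<le> r" "r \<le> 1"
    unfolding r_def n_def s_def by linarith+
  have "norm (linear_interpolation v t) = norm ((1 - r) *\<^sub>R v n + r *\<^sub>R v (Suc n))"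
    unfolding linear_interpolation_def Let_def s_def[symmetric] n_def[symmetric] r_def[symmetric] ..
  also have "\<dots> \<le> (1 - r) * norm (v n) + r * norm (v (Suc n))"
    using norm_triangle_ineq[of "(1 - r) *\<^sub>R v n" "r *\<^sub>R v (Suc n)"] r by simp
  also have "\<dots> \<le> (1 - r) * B + r * B"
    using r assms by (intro add_mono mult_left_mono) auto
  finally show ?thesis
    by (simp add: algebra_simps)
qed

lemma continuous_on_linear_interpolation:
  fixes v :: "nat \<Rightarrow> 'a::real_normed_vector"
  shows "continuous_on UNIV (linear_interpolation v)"
proof -
  have pieces: "continuous_on {..real N} (linear_interpolation v)" for N
  proof (induction N)
    case 0
    have "continuous_on {..real 0} (\<lambda>_. v 0)"
      by simp
    then show ?case
      by (rule continuous_on_cong[THEN iffD1, rotated 2]) (auto simp: linear_interpolation_nonpos)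
  next
    case (Suc N)
    have "continuous_on {real N..real N + 1} (\<lambda>t. (real N + 1 - t) *\<^sub>R v N + (t - real N) *\<^sub>R v (Suc N))"
      by (intro continuous_intros)
    then have "continuous_on {real N..real N + 1} (linear_interpolation v)"
      by (rule continuous_on_cong[THEN iffD1, rotated 2]) (auto simp: linear_interpolation_segment)
    then have "continuous_on ({..real N} \<union> {real N..real N + 1}) (linear_interpolation v)"
      by (intro continuous_on_closed_Un Suc.IH) auto
    moreover have "{..real N} \<union> {real N..real N + 1} = {..real (Suc N)}"
      by auto
    ultimately show ?case
      by simp
  qed
  show ?thesis
  proof (rule continuous_at_imp_continuous_on, rule ballI)
    fix t :: real
    obtain N where "t < real N"
      using reals_Archimedean2 by blast
    moreover have "continuous_on {..<real N} (linear_interpolation v)"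
      using pieces[of N] by (rule continuous_on_subset) auto
    ultimately show "isCont (linear_interpolation v) t"
      by (simp add: continuous_on_eq_continuous_at)
  qed
qed

text \<open>If the points \<open>u (a k)\<close> of a dense sequence satisfy \<open>dist (u (a k)) y < (1/2) ^ Suc k\<close>, then
  \<open>y\<close> is the sum of \<open>u (a 0)\<close> and the differences \<open>u (a (Suc k)) - u (a k)\<close>; the list
  \<open>v (Suc k)\<close> enumerates all differences of points of the sequence that are small enough.\<close>
lemma separable_series_coding:
  assumes "separable_space (euclidean :: 'a::real_normed_vector topology)"
  obtains v :: "nat \<Rightarrow> nat \<Rightarrow> 'a::real_normed_vector"
  where "\<And>k n. norm (v (Suc k) n) \<le> (1/2) ^ k" and "\<And>y. \<exists>m. (\<lambda>k. v k (m k)) sums y"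
proof -
  obtain C :: "'a set" where C: "countable C" "closure C = UNIV"
    using assms unfolding separable_space_def euclidean_closure_of by auto
  then have "C \<noteq> {}"
    by auto
  define u where "u = from_nat_into C"
  have u: "range u = C"
    unfolding u_def using C(1) \<open>C \<noteq> {}\<close> by simp
  define v where "v k n = (case k of 0 \<Rightarrow> u n | Suc j \<Rightarrow>
    (case prod_decode n of (a, b) \<Rightarrow> if norm (u a - u b) \<le> (1/2) ^ j then u a - u b else 0))" for k n
  have "norm (v (Suc k) n) \<le> (1/2) ^ k" for k n
    unfolding v_def by (auto split: prod.split)
  moreover have "\<exists>m. (\<lambda>k. v k (m k)) sums y" for y
  proof -
    have "\<exists>i. dist (u i) y < (1/2) ^ Suc k" for k
    proof -
      have "y \<in> closure (range u)"
        using C(2) u by simp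
      then show ?thesis
        using closure_approachable[THEN iffD1, rule_format, of y "range u" "(1/2) ^ Suc k"] by auto
    qed
    then obtain a where a: "\<And>k. dist (u (a k)) y < (1/2) ^ Suc k"
      by metis
    define m where "m k = (case k of 0 \<Rightarrow> a 0 | Suc j \<Rightarrow> prod_encode (a (Suc j), a j))" for k
    have difference: "v (Suc j) (m (Suc j)) = u (a (Suc j)) - u (a j)" for j
    proof -
      have "norm (u (a (Suc j)) - u (a j)) \<le> dist (u (a (Suc j))) y + dist (u (a j)) y"
        using dist_triangle2[of "u (a (Suc j))" "u (a j)" y] by (simp add: dist_norm)
      also have "\<dots> \<le> (1/2) ^ Suc (Suc j) + (1/2) ^ Suc j"
        using a[of "Suc j"] a[of j] by linarith
      also have "\<dots> \<le> (1/2) ^ j"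
        by simp
      finally show ?thesis
        unfolding v_def m_def by simp
    qed
    have partial: "(\<Sum>i<Suc n. v i (m i)) = u (a n)" for n
      by (induction n) (simp_all add: difference, simp add: v_def m_def)
    have "(\<lambda>n. dist (u (a n)) y) \<longlonglongrightarrow> 0"
    proof (rule Lim_null_comparison[OF _ LIMSEQ_power_zero[of "1/2 :: real"]])
      show "\<forall>\<^sub>F n in sequentially. norm (dist (u (a n)) y) \<le> (1/2) ^ n"
      proof (intro always_eventually allI)
        fix n
        have "dist (u (a n)) y < (1/2) ^ Suc n"
          by (rule a)
        also have "\<dots> \<le> (1/2) ^ n"
          by simp
        finally show "norm (dist (u (a n)) y) \<le> (1/2) ^ n"
          by simp
      qed
    qed simp
    then have "(\<lambda>n. \<Sum>i<Suc n. v i (m i)) \<longlonglongrightarrow> y"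
      unfolding partial by (rule tendsto_dist_iff[THEN iffD2])
    then have "(\<lambda>k. v k (m k)) sums y"
      unfolding sums_def by (rule filterlim_sequentially_Suc[THEN iffD1])
    then show ?thesis
      by blast
  qed
  ultimately show thesis
    using that by blast
qed

text \<open>\<open>T x\<close> sums the coding series along the code \<open>(\<Psi> k x)\<^sub>k\<close>; interpolating each list \<open>v k\<close>
  linearly between integers makes its terms continuous in \<open>x\<close>.\<close>
lemma continuous_map_onto_separable_banach:
  fixes \<Psi> :: "nat \<Rightarrow> 'a \<Rightarrow> real"
  assumes \<Psi>: "\<And>k. continuous_map X euclideanreal (\<Psi> k)"
    and codes: "\<And>m. \<exists>x\<in>topspace X. \<forall>k. \<Psi> k x = real (m k)"
    and sep: "separable_space (euclidean :: 'b::banach topology)"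
  shows "\<exists>T :: 'a \<Rightarrow> 'b. continuous_map X euclidean T \<and> T ` topspace X = UNIV"
proof -
  obtain v :: "nat \<Rightarrow> nat \<Rightarrow> 'b" where v: "\<And>k n. norm (v (Suc k) n) \<le> (1/2) ^ k"
    and series: "\<And>y. \<exists>m. (\<lambda>k. v k (m k)) sums y"
    using separable_series_coding[OF sep] by blast
  define G where "G k x = linear_interpolation (v k) (\<Psi> k x)" for k x
  define T where "T x = G 0 x + (\<Sum>k. G (Suc k) x)" for x
  have G: "continuous_map X euclidean (G k)" for k
    unfolding G_def using continuous_map_compose[OF \<Psi>[of k], of euclidean "linear_interpolation (v k)"]
    by (simp add: continuous_on_linear_interpolation o_def)
  have "continuous_map X euclidean (\<lambda>x. \<Sum>k. G (Suc k) x)"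
  proof (rule continuous_map_suminf[OF G])
    show "norm (G (Suc k) x) \<le> (1/2) ^ k" for k x
      unfolding G_def using v by (rule norm_linear_interpolation_le)
  qed (simp add: summable_geometric)
  then have "continuous_map X euclidean T"
    unfolding T_def using G by (intro continuous_map_add)
  moreover have "y \<in> T ` topspace X" for y
  proof -
    obtain m where "(\<lambda>k. v k (m k)) sums y"
      using series by blast
    moreover obtain x where x: "x \<in> topspace X" "\<And>k. \<Psi> k x = real (m k)"
      using codes by blast
    ultimately have "(\<lambda>k. G (Suc k) x) sums (y - G 0 x)"
      unfolding G_def x(2) linear_interpolation_of_nat by (subst sums_Suc_iff) simp
    then have "T x = y"
      unfolding T_def by (simp add: sums_unique[symmetric])
    then show ?thesis
      using x(1) by blast
  qed
  then have "T ` topspace X = UNIV"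
    by blast
  ultimately show ?thesis
    by blast
qed

lemma separable_if_Cp_maps_onto_weak_topology:
  fixes T :: "('s \<Rightarrow> real) \<Rightarrow> 'e::real_normed_vector"
  assumes "countable (topspace S)" "continuous_map (Cp S) weak_topology T"
    "T ` topspace (Cp S) = topspace weak_topology"
  shows "separable_space (euclidean :: 'e topology)"
proof -
  have "separable_space (weak_topology :: 'e topology)"
    using separable_space_Cp[OF assms(1)] assms(2,3) by (rule separable_space_continuous_map_image)
  then show ?thesis
    by (rule separable_space_weak_topology_imp_separable)
qed

lemma Cp_maps_onto_weak_topology_if_separable:
  assumes S: "S homeomorphic_space conv_seq" and sep: "separable_space (euclidean :: 'e::banach topology)"
  shows "\<exists>T :: ('s \<Rightarrow> real) \<Rightarrow> 'e. continuous_map (Cp S) weak_topology T \<and>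
    T ` topspace (Cp S) = topspace weak_topology"
proof -
  obtain \<Psi> :: "nat \<Rightarrow> (real \<Rightarrow> real) \<Rightarrow> real"
    where \<Psi>: "\<forall>k. continuous_map (Cp conv_seq) euclideanreal (\<Psi> k)"
      "\<forall>m. \<exists>f\<in>topspace (Cp conv_seq). \<forall>k. \<Psi> k f = real (m k)"
    using Cp_conv_seq_codes_sequences by blast
  obtain T :: "(real \<Rightarrow> real) \<Rightarrow> 'e" where T: "continuous_map (Cp conv_seq) euclidean T"
    "T ` topspace (Cp conv_seq) = UNIV"
    using continuous_map_onto_separable_banach[OF \<Psi>[rule_format] sep] by blast
  obtain h where h: "homeomorphic_map (Cp S) (Cp conv_seq) h"
    using homeomorphic_space_Cp[OF S] unfolding homeomorphic_space by blast
  have "continuous_map (Cp S) weak_topology (T \<circ> h)"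
    using continuous_map_compose[OF homeomorphic_imp_continuous_map[OF h] T(1)]
    by (rule continuous_map_into_weak_topology)
  moreover have "(T \<circ> h) ` topspace (Cp S) = topspace weak_topology"
    using T(2) by (simp only: image_comp[symmetric] homeomorphic_imp_surjective_map[OF h]) simp
  ultimately show ?thesis
    by blast
qed

lemma countable_topspace_if_homeomorphic_conv_seq:
  assumes "S homeomorphic_space conv_seq"
  shows "countable (topspace S)"
proof -
  obtain g where "homeomorphic_map conv_seq S g"
    using homeomorphic_space_sym[THEN iffD1, OF assms] unfolding homeomorphic_space by blast
  then have "topspace S = g ` topspace conv_seq"
    by (simp add: homeomorphic_imp_surjective_map)
  then show ?thesis
    by (simp add: topspace_conv_seq)
qed

theorem corollary3p2:
  fixes S :: "'s topology"
  assumes "S homeomorphic_space conv_seq"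
  shows "(\<exists>T :: ('s \<Rightarrow> real) \<Rightarrow> 'e::banach.
            continuous_map (Cp S) weak_topology T \<and>
            T ` topspace (Cp S) = topspace (weak_topology :: 'e topology))
         \<longleftrightarrow> separable_space (euclidean :: 'e topology)"
proof
  assume "\<exists>T :: ('s \<Rightarrow> real) \<Rightarrow> 'e. continuous_map (Cp S) weak_topology T \<and>
            T ` topspace (Cp S) = topspace (weak_topology :: 'e topology)"
  moreover have "countable (topspace S)"
    using assms by (rule countable_topspace_if_homeomorphic_conv_seq)
  ultimately show "separable_space (euclidean :: 'e topology)"
    by (elim exE conjE) (rule separable_if_Cp_maps_onto_weak_topology)
next
  assume "separable_space (euclidean :: 'e topology)"
  with assms show "\<exists>T :: ('s \<Rightarrow> real) \<Rightarrow> 'e. continuous_map (Cp S) weak_topology T \<and>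
      T ` topspace (Cp S) = topspace (weak_topology :: 'e topology)"
    by (rule Cp_maps_onto_weak_topology_if_separable)
qed

end
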